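(* Let $\eta>0$ and let $V\subseteq\mathbb R^n$ be an $\eta$-bounded $C^1$-submanifold of dimension $p$. Let $x\in V$ and $\epsilon>0$ be such that $\big(B(x_{\le p},\epsilon)\times B(x_{>p},p\eta\epsilon)\big)\cap\operatorname{fr}V=\emptyset$. Then the connected component of $V\cap\big(B(x_{\le p},\epsilon)\times B(x_{>p},p\eta\epsilon)\big)$ containing $x$ is the graph of a $p\eta$-Lipschitz function $g:B(x_{\le p},\epsilon)\to B(x_{>p},p\eta\epsilon)$.
   Context: For $x\in\mathbb R^k$, $|x|=\max_i|x_i|$ and $B(x,r)=\{y:|y-x|<r\}$; Lipschitz constants are with respect to this norm. For $x\in\mathbb R^n$, $x_{\le p}=(x_1,\dots,x_p)$ and $x_{>p}=(x_{p+1},\dots,x_n)$. A $p$-dimensional submanifold $V\subseteq\mathbb R^n$ is $\eta$-bounded if for every $x\in V$ there is a real $(n-p)\times p$ matrix $L$ with all entries of absolute value $\le\eta$ such that $T_xV=\{(u,Lu):u\in\mathbb R^p\}$. $\operatorname{fr}V=\operatorname{cl}V\setminus V$. *)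

theory Defs
  imports "HOL-Analysis.Analysis"
begin

text \<open>R^n is modelled as R^p x R^q (n = p + q), with a point x written (x_{\<le>p}, x_{>p}).
  All norms are the max norm infnorm.\<close>

definition sball :: "real ^ 'k \<Rightarrow> real \<Rightarrow> (real ^ 'k) set" where
  "sball c r = {y. infnorm (y - c) < r}"

definition sup_lipschitz_on :: "real \<Rightarrow> (real ^ 'p) set \<Rightarrow> (real ^ 'p \<Rightarrow> real ^ 'q) \<Rightarrow> bool" where
  "sup_lipschitz_on L S g \<longleftrightarrow> (\<forall>a\<in>S. \<forall>b\<in>S. infnorm (g a - g b) \<le> L * infnorm (a - b))"

definition c1_submanifold :: "((real ^ 'p) \<times> (real ^ 'q)) set \<Rightarrow> bool" where
  "c1_submanifold V \<longleftrightarrow>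
    (\<forall>x\<in>V. \<exists>U W (\<phi> :: real ^ 'p \<Rightarrow> (real ^ 'p) \<times> (real ^ 'q)) \<psi> \<phi>'.
        open U \<and> x \<in> U \<and> open W \<and>
        (\<forall>w\<in>W. (\<phi> has_derivative blinfun_apply (\<phi>' w)) (at w)) \<and>
        continuous_on W \<phi>' \<and>
        (\<forall>w\<in>W. inj (blinfun_apply (\<phi>' w))) \<and>
        homeomorphism W (V \<inter> U) \<phi> \<psi>)"

definition tangent_space :: "((real ^ 'p) \<times> (real ^ 'q)) set \<Rightarrow> (real ^ 'p) \<times> (real ^ 'q) \<Rightarrow> ((real ^ 'p) \<times> (real ^ 'q)) set" where
  "tangent_space V x = {v. \<exists>\<gamma> \<delta>. \<delta> > 0 \<and> \<gamma> ` {-\<delta><..<\<delta>} \<subseteq> V \<and> \<gamma> 0 = x \<and>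
       (\<gamma> has_vector_derivative v) (at 0)}"

definition eta_bounded :: "real \<Rightarrow> ((real ^ 'p) \<times> (real ^ 'q)) set \<Rightarrow> bool" where
  "eta_bounded \<eta> V \<longleftrightarrow> (\<forall>x\<in>V. \<exists>L :: real ^ 'p ^ 'q.
      (\<forall>i j. \<bar>L $ i $ j\<bar> \<le> \<eta>) \<and> tangent_space V x = {(u, L *v u) | u. True})"

definition frontier_set :: "'a::topological_space set \<Rightarrow> 'a set" where
  "frontier_set V = closure V - V"

end

theory Submission
  imports Defs
begin

(*
  Near each of its points an eta-bounded C^1 submanifold V is the graph of a function over the
  first p coordinates: tangent vectors have the form (u, L u), so the projection of a chart to
  R^p has injective derivative and the inverse function theorem applies; the derivative of the
  resulting function is a matrix with entries bounded by eta, hence it is p*eta-Lipschitz for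
  the max norm.
  Since the box B(x_{<=p}, eps) x B(x_{>p}, p*eta*eps) contains no frontier point of V, V meets
  every slightly smaller closed box in a compact set, so these graph charts have a uniform size
  there. Following the segment from x_{<=p} to u one chart at a time lifts it into V with speed
  at most p*eta*|u - x_{<=p}|, so the lift stays in the box; its endpoint is g(u). Lifts along
  nearby segments run through common charts, which makes g p*eta-Lipschitz. The graph of g is
  connected, closed in V cut with the box by continuity, and open in it because V is locally a
  graph, so it is the connected component of x.
*)

section \<open>Max-norm balls\<close>

lemma infnorm_le_iff_cart:
  fixes x :: "real ^ 'n"
  shows "infnorm x \<le> r \<longleftrightarrow> (\<forall>i. \<bar>x $ i\<bar> \<le> r)"
proof
  assume "\<forall>i. \<bar>x $ i\<bar> \<le> r"
  then show "infnorm x \<le> r"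
    unfolding infnorm_cart by (intro cSup_least) auto
qed (use component_le_infnorm_cart order_trans in blast)

lemma infnorm_less_iff_cart:
  fixes x :: "real ^ 'n"
  shows "infnorm x < r \<longleftrightarrow> (\<forall>i. \<bar>x $ i\<bar> < r)"
proof
  assume less: "\<forall>i. \<bar>x $ i\<bar> < r"
  have "{\<bar>x $ i\<bar> |i. i \<in> UNIV} = range (\<lambda>i. \<bar>x $ i\<bar>)" by auto
  then have "infnorm x = Max (range (\<lambda>i. \<bar>x $ i\<bar>))"
    unfolding infnorm_cart by (simp add: cSup_eq_Max)
  also have "\<dots> < r" using less by (subst Max_less_iff) auto
  finally show "infnorm x < r" .
qed (use component_le_infnorm_cart le_less_trans in blast)

lemma sball_eq_box: "sball c r = box (c - (\<chi> i. r)) (c + (\<chi> i. r))"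
  unfolding sball_def by (auto simp: mem_box_cart infnorm_less_iff_cart abs_less_iff algebra_simps)

lemma open_sball: "open (sball c r)"
  unfolding sball_eq_box by (rule open_box)

lemma convex_sball: "convex (sball c r)"
  unfolding sball_eq_box by (rule convex_box)

lemma infnorm_cball_eq_cbox:
  fixes c :: "real ^ 'n"
  shows "{u. infnorm (u - c) \<le> r} = cbox (c - (\<chi> i. r)) (c + (\<chi> i. r))"
  by (auto simp: mem_box_cart infnorm_le_iff_cart abs_le_iff algebra_simps)

lemma sball_center: "r > 0 \<Longrightarrow> c \<in> sball c r"
  by (simp add: sball_def infnorm_0)

lemma matrix_vector_mult_infnorm_le:
  fixes L :: "real ^ 'p ^ 'q"
  assumes "\<And>i j. \<bar>L $ i $ j\<bar> \<le> \<eta>"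
  shows "infnorm (L *v u) \<le> real CARD('p) * \<eta> * infnorm u"
  unfolding infnorm_le_iff_cart
proof
  fix i
  have "\<bar>(L *v u) $ i\<bar> \<le> (\<Sum>j\<in>UNIV. \<bar>L $ i $ j\<bar> * \<bar>u $ j\<bar>)"
    unfolding matrix_vector_mult_def by (simp add: sum_abs flip: abs_mult)
  also have "\<dots> \<le> (\<Sum>j\<in>(UNIV::'p set). \<eta> * infnorm u)"
  proof (intro sum_mono mult_mono)
    show "0 \<le> \<eta>" using assms[of i] abs_ge_zero order_trans by blast
  qed (simp_all add: assms component_le_infnorm_cart)
  finally show "\<bar>(L *v u) $ i\<bar> \<le> real CARD('p) * \<eta> * infnorm u" by simp
qed

lemma dist_Pair_le_infnorm:
  fixes a a' :: "real ^ 'p" and b b' :: "real ^ 'q"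
  shows "dist (a, b) (a', b') \<le> sqrt CARD('p) * infnorm (a - a') + sqrt CARD('q) * infnorm (b - b')"
proof -
  have "dist (a, b) (a', b') \<le> dist a a' + dist b b'"
    unfolding dist_Pair_Pair by (rule sqrt_sum_squares_le_sum_abs[THEN order_trans]) simp
  also have "\<dots> \<le> sqrt CARD('p) * infnorm (a - a') + sqrt CARD('q) * infnorm (b - b')"
    using norm_le_infnorm[of "a - a'"] norm_le_infnorm[of "b - b'"] by (simp add: dist_norm)
  finally show ?thesis .
qed

lemma sball_Times_subset_ball:
  fixes a :: "real ^ 'p" and b :: "real ^ 'q"
  defines "A \<equiv> sqrt CARD('p) + sqrt CARD('q) + 1"
  assumes "e > 0"
  shows "sball a (e / A) \<times> sball b (e / A) \<subseteq> ball (a, b) e"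
proof clarify
  have "A > 0" unfolding A_def by (simp add: add_nonneg_pos)
  fix a' b' assume "a' \<in> sball a (e / A)" "b' \<in> sball b (e / A)"
  then have "infnorm (a - a') < e / A" "infnorm (b - b') < e / A"
    by (simp_all add: sball_def infnorm_sub)
  have "dist (a, b) (a', b') \<le> sqrt CARD('p) * infnorm (a - a') + sqrt CARD('q) * infnorm (b - b')"
    by (rule dist_Pair_le_infnorm)
  also have "\<dots> \<le> (sqrt CARD('p) + sqrt CARD('q)) * (e / A)"
    unfolding distrib_right using \<open>infnorm (a - a') < e / A\<close> \<open>infnorm (b - b') < e / A\<close>
    by (intro add_mono mult_left_mono) simp_all
  also have "\<dots> < A * (e / A)"
    using \<open>e > 0\<close> \<open>A > 0\<close> by (intro mult_strict_right_mono) (simp_all add: A_def)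
  also have "\<dots> = e" using \<open>A > 0\<close> by simp
  finally show "(a', b') \<in> ball (a, b) e" by simp
qed

lemma open_contains_sball_Times:
  fixes S :: "((real ^ 'p) \<times> (real ^ 'q)) set"
  assumes "open S" "y \<in> S"
  obtains \<rho> where "\<rho> > 0" "sball (fst y) \<rho> \<times> sball (snd y) \<rho> \<subseteq> S"
proof -
  obtain e where "e > 0" and "ball y e \<subseteq> S"
    using assms open_contains_ball by blast
  moreover have "e / (sqrt CARD('p) + sqrt CARD('q) + 1) > 0"
    using \<open>e > 0\<close> by (simp add: add_nonneg_pos)
  ultimately show ?thesis
    using sball_Times_subset_ball[OF \<open>e > 0\<close>, of "fst y" "snd y"] that by auto
qed

lemma infnorm_segment_diff:
  fixes a v :: "'a::euclidean_space"
  shows "infnorm ((a + s *\<^sub>R v) - (a + t *\<^sub>R v)) = \<bar>s - t\<bar> * infnorm v"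
proof -
  have "(a + s *\<^sub>R v) - (a + t *\<^sub>R v) = (s - t) *\<^sub>R v" by (simp add: algebra_simps)
  then show ?thesis by (simp add: infnorm_mul)
qed

section \<open>Lipschitz estimates in the max norm\<close>

lemma unit_interval_step_induct:
  assumes "\<tau> > 0" and "P 0"
    and step: "\<And>s t. 0 \<le> s \<Longrightarrow> s < t \<Longrightarrow> t \<le> 1 \<Longrightarrow> t - s \<le> \<tau> \<Longrightarrow> P s \<Longrightarrow> P t"
    and "0 \<le> t" "t \<le> (1::real)"
  shows "P t"
proof -
  have upto: "\<forall>t. 0 \<le> t \<longrightarrow> t \<le> 1 \<longrightarrow> t \<le> real k * \<tau> \<longrightarrow> P t" for k
  proof (induction k)
    case 0
    then show ?case using \<open>P 0\<close> by simp
  next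
    case (Suc k)
    show ?case
    proof (intro allI impI)
      fix t :: real assume t: "0 \<le> t" "t \<le> 1" "t \<le> real (Suc k) * \<tau>"
      show "P t"
      proof (cases "t \<le> real k * \<tau>")
        case True
        then show ?thesis using Suc.IH t by blast
      next
        case False
        have "P (real k * \<tau>)" using Suc.IH False t \<open>\<tau> > 0\<close> by simp
        then show ?thesis
          using step[of "real k * \<tau>" t] False t \<open>\<tau> > 0\<close> by (simp add: algebra_simps)
      qed
    qed
  qed
  obtain k where "1 / \<tau> \<le> real k" using real_arch_simple by blast
  then have "t \<le> real k * \<tau>" using \<open>\<tau> > 0\<close> \<open>t \<le> 1\<close> by (simp add: field_simps)
  then show ?thesis using upto \<open>0 \<le> t\<close> \<open>t \<le> 1\<close> by blast
qed

definition sup_lipschitz_path_on :: "real \<Rightarrow> real set \<Rightarrow> (real \<Rightarrow> real ^ 'n) \<Rightarrow> bool" where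
  "sup_lipschitz_path_on L T \<gamma> \<longleftrightarrow> (\<forall>s\<in>T. \<forall>t\<in>T. infnorm (\<gamma> s - \<gamma> t) \<le> L * \<bar>s - t\<bar>)"

lemma sup_lipschitz_path_on_glue:
  assumes f: "sup_lipschitz_path_on L {a..s} f" and g: "sup_lipschitz_path_on L {s..b} g"
    and "f s = g s"
  shows "sup_lipschitz_path_on L {a..b} (\<lambda>t. if t \<le> s then f t else g t)"
proof -
  have *: "infnorm (f t1 - g t2) \<le> L * \<bar>t1 - t2\<bar>" if "t1 \<in> {a..s}" "t2 \<in> {s..b}" for t1 t2
  proof -
    have "infnorm (f t1 - g t2) \<le> infnorm (f t1 - f s) + infnorm (g s - g t2)"
      using infnorm_triangle[of "f t1 - f s" "g s - g t2"] \<open>f s = g s\<close> by simp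
    also have "\<dots> \<le> L * \<bar>t1 - s\<bar> + L * \<bar>s - t2\<bar>"
    proof (rule add_mono)
      have "s \<in> {a..s}" "s \<in> {s..b}" using that by auto
      then show "infnorm (f t1 - f s) \<le> L * \<bar>t1 - s\<bar>" "infnorm (g s - g t2) \<le> L * \<bar>s - t2\<bar>"
        using f g that unfolding sup_lipschitz_path_on_def by blast+
    qed
    also have "\<dots> = L * \<bar>t1 - t2\<bar>" using that by (simp add: algebra_simps)
    finally show ?thesis .
  qed
  show ?thesis
    unfolding sup_lipschitz_path_on_def
  proof (intro ballI)
    fix t1 t2 assume "t1 \<in> {a..b}" "t2 \<in> {a..b}"
    then consider "t1 \<le> s" "t2 \<le> s" | "t1 \<le> s" "\<not> t2 \<le> s" | "\<not> t1 \<le> s" "t2 \<le> s" | "\<not> t1 \<le> s" "\<not> t2 \<le> s"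
      by blast
    then show "infnorm ((if t1 \<le> s then f t1 else g t1) - (if t2 \<le> s then f t2 else g t2)) \<le> L * \<bar>t1 - t2\<bar>"
    proof cases
      case 3
      then show ?thesis
        using *[of t2 t1] \<open>t1 \<in> _\<close> \<open>t2 \<in> _\<close> by (simp add: infnorm_sub abs_minus_commute)
    qed (use f g * \<open>t1 \<in> _\<close> \<open>t2 \<in> _\<close> in \<open>auto simp: sup_lipschitz_path_on_def\<close>)
  qed
qed

lemma sup_lipschitz_on_convex_if_derivative_bound:
  fixes h :: "real ^ 'p \<Rightarrow> real ^ 'q"
  assumes "convex S"
    and deriv: "\<And>u. u \<in> S \<Longrightarrow> (h has_derivative h' u) (at u)"
    and bound: "\<And>u v. u \<in> S \<Longrightarrow> infnorm (h' u v) \<le> M * infnorm v"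
  shows "sup_lipschitz_on M S h"
  unfolding sup_lipschitz_on_def
proof (intro ballI)
  fix a b assume "a \<in> S" "b \<in> S"
  define l where "l t = a + t *\<^sub>R (b - a)" for t
  have l_in: "l t \<in> S" if "t \<in> {0..1}" for t
    using convexD_alt[OF \<open>convex S\<close> \<open>a \<in> S\<close> \<open>b \<in> S\<close>, of t] that
    by (simp add: l_def algebra_simps)
  have "\<bar>(h b - h a) $ j\<bar> \<le> M * infnorm (b - a)" for j
  proof -
    have l_deriv: "(l has_derivative (\<lambda>s. s *\<^sub>R (b - a))) (at t)" for t
      unfolding l_def by (auto intro!: derivative_eq_intros)
    have deriv_j: "((\<lambda>t. h (l t) $ j) has_derivative (\<lambda>s. h' (l t) (s *\<^sub>R (b - a)) $ j)) (at t)"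
      if "t \<in> {0..1}" for t
      using bounded_linear.has_derivative[OF bounded_linear_vec_nth
          has_derivative_compose[OF l_deriv deriv[OF l_in[OF that]]]] .
    then have "continuous_on {0..1} (\<lambda>t. h (l t) $ j)"
      using has_derivative_continuous continuous_at_imp_continuous_on by blast
    with deriv_j obtain t where t: "t \<in> {0<..<1}"
      and "norm (h (l 1) $ j - h (l 0) $ j) \<le> norm (h' (l t) ((1 - 0) *\<^sub>R (b - a)) $ j)"
      using mvt_general[of 0 1 "\<lambda>t. h (l t) $ j" "\<lambda>t s. h' (l t) (s *\<^sub>R (b - a)) $ j"]
      by auto
    then have "\<bar>h (l 1) $ j - h (l 0) $ j\<bar> \<le> \<bar>h' (l t) (b - a) $ j\<bar>" by simp
    also have "\<dots> \<le> infnorm (h' (l t) (b - a))" by (rule component_le_infnorm_cart)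
    also have "\<dots> \<le> M * infnorm (b - a)" using bound l_in t by simp
    finally show ?thesis by (simp add: l_def)
  qed
  then have "infnorm (h b - h a) \<le> M * infnorm (b - a)"
    by (simp add: infnorm_le_iff_cart)
  then show "infnorm (h a - h b) \<le> M * infnorm (a - b)" by (simp add: infnorm_sub)
qed

lemma sup_lipschitz_on_convex_if_local:
  fixes f :: "real ^ 'p \<Rightarrow> real ^ 'q"
  assumes "convex S" and "\<delta> > 0"
    and local: "\<And>a b. a \<in> S \<Longrightarrow> b \<in> S \<Longrightarrow> infnorm (a - b) < \<delta> \<Longrightarrow>
                  infnorm (f a - f b) \<le> L * infnorm (a - b)"
  shows "sup_lipschitz_on L S f"
  unfolding sup_lipschitz_on_def
proof (intro ballI)
  fix a b assume "a \<in> S" "b \<in> S"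
  define l where "l t = a + t *\<^sub>R (b - a)" for t
  define D where "D = infnorm (b - a)"
  have l_in: "l t \<in> S" if "0 \<le> t" "t \<le> 1" for t
    using convexD_alt[OF \<open>convex S\<close> \<open>a \<in> S\<close> \<open>b \<in> S\<close>, of t] that
    by (simp add: l_def algebra_simps)
  have l_dist: "infnorm (l t - l s) = \<bar>t - s\<bar> * D" for s t
    unfolding l_def D_def by (rule infnorm_segment_diff)
  have D0: "0 \<le> D" unfolding D_def by (rule infnorm_pos_le)
  have "infnorm (f (l t) - f a) \<le> L * (t * D)" if "0 \<le> t" "t \<le> 1" for t
  proof (rule unit_interval_step_induct[where P = "\<lambda>t. infnorm (f (l t) - f a) \<le> L * (t * D)"
        and \<tau> = "\<delta> / (D + 1)", OF _ _ _ that])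
    show "\<delta> / (D + 1) > 0" using \<open>\<delta> > 0\<close> D0 by simp
    show "infnorm (f (l 0) - f a) \<le> L * (0 * D)" by (simp add: l_def infnorm_0)
  next
    fix s t assume st: "0 \<le> s" "s < t" "t \<le> 1" "t - s \<le> \<delta> / (D + 1)"
      and IH: "infnorm (f (l s) - f a) \<le> L * (s * D)"
    have "(t - s) * D \<le> \<delta> / (D + 1) * D" using st D0 by (intro mult_right_mono) auto
    also have "\<dots> < \<delta>" using \<open>\<delta> > 0\<close> D0 by (simp add: field_simps)
    finally have "infnorm (l t - l s) < \<delta>" using st by (simp add: l_dist)
    then have "infnorm (f (l t) - f (l s)) \<le> L * ((t - s) * D)"
      using local[of "l t" "l s"] l_in st by (simp add: l_dist)
    then have "infnorm (f (l t) - f a) \<le> L * ((t - s) * D) + L * (s * D)"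
      using IH infnorm_triangle[of "f (l t) - f (l s)" "f (l s) - f a"] by simp
    then show "infnorm (f (l t) - f a) \<le> L * (t * D)" by (simp add: algebra_simps)
  qed
  from this[of 1] show "infnorm (f a - f b) \<le> L * infnorm (a - b)"
    by (simp add: l_def D_def infnorm_sub)
qed

lemma sup_lipschitz_on_imp_continuous_on:
  fixes g :: "real ^ 'p \<Rightarrow> real ^ 'q"
  assumes "sup_lipschitz_on L S g"
  shows "continuous_on S g"
proof (rule lipschitz_on_continuous_on)
  show "(sqrt CARD('q) * \<bar>L\<bar>)-lipschitz_on S g"
  proof (rule lipschitz_onI)
    fix a b assume "a \<in> S" "b \<in> S"
    have "dist (g a) (g b) \<le> sqrt CARD('q) * infnorm (g a - g b)"
      unfolding dist_norm using norm_le_infnorm[of "g a - g b"] by simp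
    also have "\<dots> \<le> sqrt CARD('q) * (\<bar>L\<bar> * dist a b)"
    proof (intro mult_left_mono)
      have "infnorm (g a - g b) \<le> L * infnorm (a - b)"
        using assms \<open>a \<in> S\<close> \<open>b \<in> S\<close> unfolding sup_lipschitz_on_def by blast
      also have "\<dots> \<le> \<bar>L\<bar> * dist a b"
        by (intro mult_mono) (simp_all add: dist_norm infnorm_le_norm infnorm_pos_le)
      finally show "infnorm (g a - g b) \<le> \<bar>L\<bar> * dist a b" .
    qed simp
    finally show "dist (g a) (g b) \<le> sqrt CARD('q) * \<bar>L\<bar> * dist a b"
      by (simp add: mult.assoc)
  qed simp
qed

section \<open>Eta-bounded submanifolds are locally Lipschitz graphs\<close>

lemma chart_derivative_in_tangent_space:
  fixes \<phi> :: "'a::real_normed_vector \<Rightarrow> (real ^ 'p) \<times> (real ^ 'q)"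
  assumes "open W" "\<phi> ` W \<subseteq> V" "w \<in> W" and deriv: "(\<phi> has_derivative D) (at w)"
  shows "D v \<in> tangent_space V (\<phi> w)"
proof -
  have "open ((\<lambda>t::real. w + t *\<^sub>R v) -` W)"
    by (intro continuous_open_vimage \<open>open W\<close>) (auto intro: continuous_intros)
  moreover have "0 \<in> (\<lambda>t::real. w + t *\<^sub>R v) -` W" using \<open>w \<in> W\<close> by simp
  ultimately obtain \<delta> where "\<delta> > 0" and "ball 0 \<delta> \<subseteq> (\<lambda>t::real. w + t *\<^sub>R v) -` W"
    using open_contains_ball by blast
  then have "(\<lambda>t. \<phi> (w + t *\<^sub>R v)) ` {-\<delta><..<\<delta>} \<subseteq> V"
    using \<open>\<phi> ` W \<subseteq> V\<close> by (auto simp: ball_eq_greaterThanLessThan)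
  moreover have "((\<lambda>t. \<phi> (w + t *\<^sub>R v)) has_vector_derivative D v) (at 0)"
  proof -
    have "((\<lambda>t::real. w + t *\<^sub>R v) has_derivative (\<lambda>t. t *\<^sub>R v)) (at 0)"
      by (auto intro!: derivative_eq_intros)
    from has_derivative_compose[OF this] deriv
    have "((\<lambda>t. \<phi> (w + t *\<^sub>R v)) has_derivative (\<lambda>t. D (t *\<^sub>R v))) (at 0)" by simp
    then show ?thesis
      unfolding has_vector_derivative_def
      using linear_scale[OF has_derivative_linear[OF deriv]] by simp
  qed
  ultimately show ?thesis
    unfolding tangent_space_def using \<open>\<delta> > 0\<close>
    by (intro CollectI exI[of _ "\<lambda>t. \<phi> (w + t *\<^sub>R v)"] exI[of _ \<delta>]) simp
qed

lemma eta_bounded_derivative_graph: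
  fixes \<phi> :: "'a::real_normed_vector \<Rightarrow> (real ^ 'p) \<times> (real ^ 'q)"
  assumes "eta_bounded \<eta> V" "open W" "\<phi> ` W \<subseteq> V" "w \<in> W" "(\<phi> has_derivative D) (at w)"
  obtains L :: "real ^ 'p ^ 'q" where "\<And>i j. \<bar>L $ i $ j\<bar> \<le> \<eta>" "\<And>v. snd (D v) = L *v fst (D v)"
proof -
  obtain L :: "real ^ 'p ^ 'q" where "\<forall>i j. \<bar>L $ i $ j\<bar> \<le> \<eta>"
    and "tangent_space V (\<phi> w) = {(u, L *v u) |u. True}"
    using assms(1,3,4) unfolding eta_bounded_def by blast
  moreover have "snd (D v) = L *v fst (D v)" for v
    using chart_derivative_in_tangent_space[OF assms(2-5), of v] \<open>tangent_space V _ = _\<close> by auto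
  ultimately show ?thesis by (intro that[of L]) auto
qed

lemma eta_bounded_derivative_snd_le:
  fixes \<phi> :: "'a::real_normed_vector \<Rightarrow> (real ^ 'p) \<times> (real ^ 'q)"
  assumes "eta_bounded \<eta> V" "open W" "\<phi> ` W \<subseteq> V" "w \<in> W" "(\<phi> has_derivative D) (at w)"
  shows "infnorm (snd (D v)) \<le> real CARD('p) * \<eta> * infnorm (fst (D v))"
proof -
  obtain L :: "real ^ 'p ^ 'q" where "\<And>i j. \<bar>L $ i $ j\<bar> \<le> \<eta>" "\<And>v. snd (D v) = L *v fst (D v)"
    using eta_bounded_derivative_graph[OF assms] by blast
  then show ?thesis using matrix_vector_mult_infnorm_le by metis
qed

lemma eta_bounded_derivative_fst_inj:
  fixes \<phi> :: "'a::real_normed_vector \<Rightarrow> (real ^ 'p) \<times> (real ^ 'q)"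
  assumes "eta_bounded \<eta> V" "open W" "\<phi> ` W \<subseteq> V" "w \<in> W"
    and deriv: "(\<phi> has_derivative D) (at w)" and "inj D"
  shows "inj (\<lambda>v. fst (D v))"
proof (rule injI)
  fix a b assume "fst (D a) = fst (D b)"
  obtain L :: "real ^ 'p ^ 'q" where graph: "\<And>v. snd (D v) = L *v fst (D v)"
    using eta_bounded_derivative_graph[OF assms(1-4) deriv] by metis
  have "snd (D a) = snd (D b)"
    unfolding graph[of a] graph[of b] \<open>fst (D a) = fst (D b)\<close> ..
  with \<open>fst (D a) = fst (D b)\<close> have "D a = D b" by (rule prod_eqI)
  with \<open>inj D\<close> show "a = b" by (rule injD)
qed

lemma blinfun_left_inverse:
  fixes A :: "'a::euclidean_space \<Rightarrow>\<^sub>L 'b::euclidean_space"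
  assumes "inj (blinfun_apply A)"
  obtains B where "B o\<^sub>L A = id_blinfun"
proof -
  obtain g where "linear g" and g: "g \<circ> blinfun_apply A = id"
    using linear_injective_left_inverse[OF bounded_linear.linear[OF blinfun.bounded_linear_right] assms] by blast
  then have "blinfun_apply (Blinfun g) = g"
    by (simp add: bounded_linear_Blinfun_apply linear_conv_bounded_linear)
  with g show ?thesis
    by (intro that[of "Blinfun g"] blinfun_eqI) (simp add: pointfree_idE)
qed

lemma fst_chart_local_inverse:
  fixes \<phi> :: "real ^ 'p \<Rightarrow> (real ^ 'p) \<times> (real ^ 'q)"
  assumes "open W" "w0 \<in> W"
    and deriv: "\<And>w. w \<in> W \<Longrightarrow> (\<phi> has_derivative blinfun_apply (\<phi>' w)) (at w)"
    and "continuous_on W \<phi>'" and "inj (\<lambda>v. fst (\<phi>' w0 v))"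
  obtains U N k k' where "open U" "U \<subseteq> W" "w0 \<in> U" "open N"
    "homeomorphism U N (\<lambda>w. fst (\<phi> w)) k"
    "\<And>u. u \<in> N \<Longrightarrow> (k has_derivative k' u) (at u)"
    "\<And>u v. u \<in> N \<Longrightarrow> fst (\<phi>' (k u) (k' u v)) = v"
proof -
  define F' where "F' w = fst_blinfun o\<^sub>L \<phi>' w" for w
  have F'_apply: "blinfun_apply (F' w) = (\<lambda>v. fst (\<phi>' w v))" for w
    by (simp add: F'_def fun_eq_iff)
  have f_deriv: "((\<lambda>w. fst (\<phi> w)) has_derivative blinfun_apply (F' w)) (at w)" if "w \<in> W" for w
    unfolding F'_apply using has_derivative_fst[OF deriv[OF that]] .
  have "continuous_on W F'"
    unfolding F'_def by (intro continuous_intros \<open>continuous_on W \<phi>'\<close>)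
  have "inj (blinfun_apply (F' w0))"
    unfolding F'_apply by fact
  then obtain B where B: "B o\<^sub>L F' w0 = id_blinfun"
    by (rule blinfun_left_inverse)
  obtain U N k k' where "open U" "U \<subseteq> W" "w0 \<in> U" "open N"
    and "homeomorphism U N (\<lambda>w. fst (\<phi> w)) k"
    and "\<And>u. u \<in> N \<Longrightarrow> (k has_derivative k' u) (at u)"
    and k'_eq: "\<And>u. u \<in> N \<Longrightarrow> k' u = inv (blinfun_apply (F' (k u)))"
    and F'_bij: "\<And>u. u \<in> N \<Longrightarrow> bij (blinfun_apply (F' (k u)))"
    using inverse_function_theorem[OF \<open>open W\<close> f_deriv \<open>continuous_on W F'\<close> \<open>w0 \<in> W\<close> B]
    by metis
  moreover have "fst (\<phi>' (k u) (k' u v)) = v" if "u \<in> N" for u v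
    using surj_f_inv_f[OF bij_is_surj[OF F'_bij[OF that]], of v] k'_eq[OF that]
    unfolding F'_apply by simp
  ultimately show ?thesis using that by blast
qed

lemma c1_submanifold_local_graph:
  fixes V :: "((real ^ 'p) \<times> (real ^ 'q)) set"
  assumes "c1_submanifold V" and bounded: "eta_bounded \<eta> V" and "y \<in> V"
  obtains G N h h' where "open G" "y \<in> G" "open N"
    "\<And>z. z \<in> V \<inter> G \<Longrightarrow> fst z \<in> N \<and> snd z = h (fst z)"
    "\<And>u. u \<in> N \<Longrightarrow> (u, h u) \<in> V"
    "\<And>u. u \<in> N \<Longrightarrow> (h has_derivative h' u) (at u)"
    "\<And>u v. u \<in> N \<Longrightarrow> infnorm (h' u v) \<le> real CARD('p) * \<eta> * infnorm v"
proof -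
  obtain U W and \<phi> :: "real ^ 'p \<Rightarrow> (real ^ 'p) \<times> (real ^ 'q)" and \<psi> \<phi>' where
    "open U" "y \<in> U" "open W"
    and deriv: "\<And>w. w \<in> W \<Longrightarrow> (\<phi> has_derivative blinfun_apply (\<phi>' w)) (at w)"
    and "continuous_on W \<phi>'" and inj: "\<And>w. w \<in> W \<Longrightarrow> inj (blinfun_apply (\<phi>' w))"
    and hom: "homeomorphism W (V \<inter> U) \<phi> \<psi>"
    using assms(1,3) unfolding c1_submanifold_def by meson
  have \<phi>W: "\<phi> ` W = V \<inter> U" and "\<psi> y \<in> W" and "\<phi> (\<psi> y) = y"
    using hom \<open>y \<in> V\<close> \<open>y \<in> U\<close> unfolding homeomorphism_def by auto
  have \<phi>W_V: "\<phi> ` W \<subseteq> V" using \<phi>W by blast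
  have "inj (\<lambda>v. fst (\<phi>' (\<psi> y) v))"
    using \<open>\<psi> y \<in> W\<close> by (intro eta_bounded_derivative_fst_inj[OF bounded \<open>open W\<close> \<phi>W_V _ deriv inj])
  then obtain U' N k k' where "open U'" "U' \<subseteq> W" "\<psi> y \<in> U'" "open N"
    and hom': "homeomorphism U' N (\<lambda>w. fst (\<phi> w)) k"
    and k_deriv: "\<And>u. u \<in> N \<Longrightarrow> (k has_derivative k' u) (at u)"
    and k'_inv: "\<And>u v. u \<in> N \<Longrightarrow> fst (\<phi>' (k u) (k' u v)) = v"
    using fst_chart_local_inverse[OF \<open>open W\<close> \<open>\<psi> y \<in> W\<close> deriv \<open>continuous_on W \<phi>'\<close>] by metis
  have in_W: "k u \<in> W" and fst_\<phi>_k: "fst (\<phi> (k u)) = u" if "u \<in> N" for u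
    using hom' that \<open>U' \<subseteq> W\<close> unfolding homeomorphism_def by auto
  obtain Q where "open Q" and Q: "\<phi> ` U' = V \<inter> U \<inter> Q"
    using homeomorphism_imp_open_map[OF hom open_subset[OF \<open>U' \<subseteq> W\<close> \<open>open U'\<close>]]
    unfolding openin_open by blast
  define h where "h u = snd (\<phi> (k u))" for u
  show ?thesis
  proof
    show "open (U \<inter> Q)" using \<open>open U\<close> \<open>open Q\<close> by blast
    have "y \<in> \<phi> ` U'" using \<open>\<psi> y \<in> U'\<close> \<open>\<phi> (\<psi> y) = y\<close> by (metis imageI)
    then show "y \<in> U \<inter> Q" using Q by blast
    show "fst z \<in> N \<and> snd z = h (fst z)" if "z \<in> V \<inter> (U \<inter> Q)" for z
    proof -
      have "z \<in> \<phi> ` U'" using that by (simp add: Q)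
      then obtain w where "w \<in> U'" "z = \<phi> w" by (rule imageE)
      moreover have "fst (\<phi> w) \<in> N" "k (fst (\<phi> w)) = w"
        using hom' \<open>w \<in> U'\<close> unfolding homeomorphism_def by auto
      ultimately show ?thesis by (simp add: h_def)
    qed
    show "(u, h u) \<in> V" if "u \<in> N" for u
    proof -
      have "\<phi> (k u) \<in> V" using \<phi>W_V in_W[OF that] unfolding image_subset_iff by blast
      moreover have "\<phi> (k u) = (u, h u)"
        using fst_\<phi>_k[OF that] by (simp add: h_def prod_eq_iff)
      ultimately show ?thesis by simp
    qed
    show "(h has_derivative (\<lambda>v. snd (\<phi>' (k u) (k' u v)))) (at u)" if "u \<in> N" for u
      unfolding h_def
      by (rule has_derivative_snd has_derivative_compose[OF k_deriv[OF that] deriv[OF in_W[OF that]]])+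
    show "infnorm (snd (\<phi>' (k u) (k' u v))) \<le> real CARD('p) * \<eta> * infnorm v" if "u \<in> N" for u v
      using eta_bounded_derivative_snd_le[OF bounded \<open>open W\<close> \<phi>W_V in_W[OF that]
          deriv[OF in_W[OF that]], of "k' u v"] k'_inv[OF that]
      by simp
  qed fact
qed

definition graph_chart ::
    "real \<Rightarrow> ((real ^ 'p) \<times> (real ^ 'q)) set \<Rightarrow> (real ^ 'p) set \<Rightarrow> (real ^ 'q) set \<Rightarrow>
     (real ^ 'p \<Rightarrow> real ^ 'q) \<Rightarrow> bool" where
  "graph_chart L V A B h \<longleftrightarrow>
     (\<forall>z\<in>V \<inter> (A \<times> B). snd z = h (fst z)) \<and> (\<forall>u\<in>A. (u, h u) \<in> V) \<and> sup_lipschitz_on L A h"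

lemma graph_chart_subset:
  "graph_chart L V A B h \<Longrightarrow> A' \<subseteq> A \<Longrightarrow> B' \<subseteq> B \<Longrightarrow> graph_chart L V A' B' h"
  unfolding graph_chart_def sup_lipschitz_on_def by blast

lemma graph_chart_lipschitz:
  assumes "graph_chart L V A B h" "z \<in> V \<inter> (A \<times> B)" "z' \<in> V \<inter> (A \<times> B)"
  shows "infnorm (snd z - snd z') \<le> L * infnorm (fst z - fst z')"
  using assms unfolding graph_chart_def sup_lipschitz_on_def by (metis IntD2 mem_Times_iff)

lemma c1_submanifold_graph_chart:
  fixes V :: "((real ^ 'p) \<times> (real ^ 'q)) set"
  assumes "c1_submanifold V" "eta_bounded \<eta> V" "y \<in> V"
  obtains \<rho> h where "\<rho> > 0" "graph_chart (real CARD('p) * \<eta>) V (sball (fst y) \<rho>) (sball (snd y) \<rho>) h"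
proof -
  obtain G N h h' where "open G" "y \<in> G" "open N"
    and graph: "\<And>z. z \<in> V \<inter> G \<Longrightarrow> fst z \<in> N \<and> snd z = h (fst z)"
    and in_V: "\<And>u. u \<in> N \<Longrightarrow> (u, h u) \<in> V"
    and deriv: "\<And>u. u \<in> N \<Longrightarrow> (h has_derivative h' u) (at u)"
    and bound: "\<And>u v. u \<in> N \<Longrightarrow> infnorm (h' u v) \<le> real CARD('p) * \<eta> * infnorm v"
    using c1_submanifold_local_graph[OF assms] by metis
  have "y \<in> G \<inter> (N \<times> UNIV)" using graph[of y] \<open>y \<in> G\<close> \<open>y \<in> V\<close> by (simp add: mem_Times_iff)
  moreover have "open (G \<inter> (N \<times> UNIV))" using \<open>open G\<close> \<open>open N\<close> by (intro open_Int open_Times) auto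
  ultimately obtain \<rho> where "\<rho> > 0" and box: "sball (fst y) \<rho> \<times> sball (snd y) \<rho> \<subseteq> G \<inter> (N \<times> UNIV)"
    using open_contains_sball_Times by metis
  then have "sball (fst y) \<rho> \<subseteq> N" using sball_center[of \<rho> "snd y"] by blast
  have "graph_chart (real CARD('p) * \<eta>) V (sball (fst y) \<rho>) (sball (snd y) \<rho>) h"
    unfolding graph_chart_def
  proof (intro conjI)
    show "\<forall>z\<in>V \<inter> (sball (fst y) \<rho> \<times> sball (snd y) \<rho>). snd z = h (fst z)"
      using graph box by blast
    show "\<forall>u\<in>sball (fst y) \<rho>. (u, h u) \<in> V"
      using in_V \<open>sball (fst y) \<rho> \<subseteq> N\<close> by blast
    show "sup_lipschitz_on (real CARD('p) * \<eta>) (sball (fst y) \<rho>) h"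
      using deriv bound \<open>sball (fst y) \<rho> \<subseteq> N\<close>
      by (intro sup_lipschitz_on_convex_if_derivative_bound[OF convex_sball]) auto
  qed
  with \<open>\<rho> > 0\<close> show ?thesis using that by blast
qed

section \<open>The connected component as a Lipschitz graph\<close>

lemma connected_component_eq_clopen:
  assumes "x \<in> T" "connected T" "openin (top_of_set S) T" "closedin (top_of_set S) T"
  shows "connected_component_set S x = T"
proof (rule connected_component_unique)
  show "T \<subseteq> S" using openin_imp_subset[OF assms(3)] .
  fix C assume "x \<in> C" "C \<subseteq> S" "connected C"
  then have "connectedin (top_of_set S) C" by (simp add: connectedin_subtopology)
  then have "C \<subseteq> T \<or> disjnt C T"
    using connectedin_clopen_cases assms(3,4) by blast
  with \<open>x \<in> C\<close> \<open>x \<in> T\<close> show "C \<subseteq> T" by (auto simp: disjnt_iff)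
qed (use assms in auto)

lemma closedin_graph:
  fixes g :: "'a::topological_space \<Rightarrow> 'b::real_normed_vector"
  assumes "continuous_on S g"
  shows "closedin (top_of_set (S \<times> UNIV)) {(u, g u) |u. u \<in> S}"
proof -
  have "continuous_on (S \<times> UNIV) (\<lambda>z. snd z - g (fst z))"
    by (intro continuous_intros continuous_on_compose2[OF assms]) auto
  then have "closedin (top_of_set (S \<times> UNIV)) {z \<in> S \<times> UNIV. snd z - g (fst z) = 0}"
    by (rule continuous_closedin_preimage_constant)
  moreover have "{z \<in> S \<times> UNIV. snd z - g (fst z) = 0} = {(u, g u) |u. u \<in> S}"
    by force
  ultimately show ?thesis by simp
qed

locale eta_bounded_box =
  fixes V :: "((real ^ 'p) \<times> (real ^ 'q)) set" and c :: "real ^ 'p" and d :: "real ^ 'q"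
    and \<eta> \<epsilon> lip :: real
  defines lip_def: "lip \<equiv> real CARD('p) * \<eta>"
  assumes eta_pos: "\<eta> > 0" and c1: "c1_submanifold V" and bounded: "eta_bounded \<eta> V"
    and center_in_V: "(c, d) \<in> V" and eps_pos: "\<epsilon> > 0"
    and frontier_disjoint: "(sball c \<epsilon> \<times> sball d (lip * \<epsilon>)) \<inter> frontier_set V = {}"
begin

lemma lip_pos: "lip > 0"
  using eta_pos by (simp add: lip_def)

definition V_cbox :: "real \<Rightarrow> ((real ^ 'p) \<times> (real ^ 'q)) set" where
  "V_cbox r = V \<inter> ({u. infnorm (u - c) \<le> r} \<times> {v. infnorm (v - d) \<le> lip * r})"

lemma compact_V_cbox:
  assumes "r < \<epsilon>"
  shows "compact (V_cbox r)"
proof -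
  let ?Q = "{u. infnorm (u - c) \<le> r} \<times> {v. infnorm (v - d) \<le> lip * r}"
  have "compact ?Q"
    unfolding infnorm_cball_eq_cbox by (intro compact_Times compact_cbox)
  have "lip * r < lip * \<epsilon>" using assms lip_pos by simp
  with assms have Q_sub: "?Q \<subseteq> sball c \<epsilon> \<times> sball d (lip * \<epsilon>)"
    by (auto simp: sball_def)
  have "V_cbox r = closure V \<inter> ?Q"
  proof
    show "closure V \<inter> ?Q \<subseteq> V_cbox r"
      using Q_sub frontier_disjoint unfolding V_cbox_def frontier_set_def by blast
  qed (use closure_subset in \<open>auto simp: V_cbox_def\<close>)
  with \<open>compact ?Q\<close> show ?thesis by (simp add: closed_Int_compact)
qed

lemma uniform_graph_charts:
  assumes "r < \<epsilon>"
  obtains e where "e > 0"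
    "\<And>y. y \<in> V_cbox r \<Longrightarrow> \<exists>h. graph_chart lip V (sball (fst y) e) (sball (snd y) e) h"
proof -
  define \<G> where "\<G> = {sball a \<rho> \<times> sball b \<rho> |a b \<rho>. \<exists>h. graph_chart lip V (sball a \<rho>) (sball b \<rho>) h}"
  have "V_cbox r \<subseteq> \<Union>\<G>"
  proof
    fix y assume "y \<in> V_cbox r"
    then obtain \<rho> h where "\<rho> > 0" "graph_chart lip V (sball (fst y) \<rho>) (sball (snd y) \<rho>) h"
      using c1_submanifold_graph_chart[OF c1 bounded] unfolding V_cbox_def lip_def by blast
    then show "y \<in> \<Union>\<G>"
      unfolding \<G>_def using sball_center[of \<rho> "fst y"] sball_center[of \<rho> "snd y"]
      by (intro UnionI[of "sball (fst y) \<rho> \<times> sball (snd y) \<rho>"]) (auto simp: mem_Times_iff)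
  qed
  moreover have "open G" if "G \<in> \<G>" for G
    using that unfolding \<G>_def by (auto intro: open_Times open_sball)
  \<comment> \<open>a Lebesgue number of the cover by chart boxes\<close>
  ultimately obtain e where "e > 0" and cover: "\<And>y. y \<in> V_cbox r \<Longrightarrow> \<exists>G\<in>\<G>. ball y e \<subseteq> G"
    using Heine_Borel_lemma[OF compact_V_cbox[OF assms]] by metis
  define e' where "e' = e / (sqrt CARD('p) + sqrt CARD('q) + 1)"
  show ?thesis
  proof
    show "e' > 0" using \<open>e > 0\<close> by (simp add: e'_def add_nonneg_pos)
    fix y assume "y \<in> V_cbox r"
    then obtain a b \<rho> h where chart: "graph_chart lip V (sball a \<rho>) (sball b \<rho>) h"
      and "ball y e \<subseteq> sball a \<rho> \<times> sball b \<rho>"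
      using cover unfolding \<G>_def by blast
    with sball_Times_subset_ball[OF \<open>e > 0\<close>, of "fst y" "snd y"]
    have "sball (fst y) e' \<times> sball (snd y) e' \<subseteq> sball a \<rho> \<times> sball b \<rho>"
      unfolding e'_def by auto
    then have "sball (fst y) e' \<subseteq> sball a \<rho>" "sball (snd y) e' \<subseteq> sball b \<rho>"
      using sball_center[OF \<open>e' > 0\<close>, of "fst y"] sball_center[OF \<open>e' > 0\<close>, of "snd y"]
      by (auto simp: times_subset_iff)
    with chart show "\<exists>h. graph_chart lip V (sball (fst y) e') (sball (snd y) e') h"
      using graph_chart_subset by blast
  qed
qed

definition ray_lift :: "real \<Rightarrow> real ^ 'p \<Rightarrow> (real \<Rightarrow> real ^ 'q) \<Rightarrow> bool" where
  "ray_lift T u \<gamma> \<longleftrightarrow> \<gamma> 0 = d \<and> (\<forall>t\<in>{0..T}. (c + t *\<^sub>R (u - c), \<gamma> t) \<in> V) \<and>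
     sup_lipschitz_path_on (lip * infnorm (u - c)) {0..T} \<gamma>"

lemma ray_lift_lipschitz:
  assumes "ray_lift T u \<gamma>" "s \<in> {0..T}" "t \<in> {0..T}"
  shows "infnorm (\<gamma> t - \<gamma> s) \<le> lip * infnorm (u - c) * \<bar>t - s\<bar>"
  using assms unfolding ray_lift_def sup_lipschitz_path_on_def by blast

lemma ray_lift_in_V_cbox:
  assumes lift: "ray_lift T u \<gamma>" and "infnorm (u - c) \<le> r" "0 \<le> t" "t \<le> T" "T \<le> 1"
  shows "(c + t *\<^sub>R (u - c), \<gamma> t) \<in> V_cbox r"
proof -
  have "t * infnorm (u - c) \<le> 1 * r"
    using assms(2-5) by (intro mult_mono) (auto simp: infnorm_pos_le)
  then have "infnorm (c + t *\<^sub>R (u - c) - c) \<le> r"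
    using \<open>0 \<le> t\<close> by (simp add: infnorm_mul)
  moreover have "infnorm (\<gamma> t - d) \<le> lip * r"
  proof -
    have "infnorm (\<gamma> t - d) = infnorm (\<gamma> t - \<gamma> 0)"
      using lift by (simp add: ray_lift_def)
    also have "\<dots> \<le> lip * infnorm (u - c) * \<bar>t - 0\<bar>"
      by (rule ray_lift_lipschitz[OF lift]) (use assms(3,4) in auto)
    also have "\<dots> = lip * (t * infnorm (u - c))"
      using \<open>0 \<le> t\<close> by simp
    also have "\<dots> \<le> lip * r"
      using \<open>t * infnorm (u - c) \<le> 1 * r\<close> lip_pos by (intro mult_left_mono) auto
    finally show ?thesis .
  qed
  ultimately show ?thesis
    using lift assms(3,4) unfolding ray_lift_def V_cbox_def by auto
qed

lemma ray_lift_extend: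
  assumes lift: "ray_lift s u \<gamma>" and "0 \<le> s" "s \<le> t" "e > 0"
    and chart: "graph_chart lip V (sball (c + s *\<^sub>R (u - c)) e) (sball (\<gamma> s) e) h"
    and short: "(t - s) * infnorm (u - c) < e"
  shows "ray_lift t u (\<lambda>\<tau>. if \<tau> \<le> s then \<gamma> \<tau> else h (c + \<tau> *\<^sub>R (u - c)))"
proof -
  define l where "l \<tau> = c + \<tau> *\<^sub>R (u - c)" for \<tau>
  have l_near: "l \<tau> \<in> sball (l s) e" if "\<tau> \<in> {s..t}" for \<tau>
  proof -
    have "infnorm (l \<tau> - l s) \<le> (t - s) * infnorm (u - c)"
      using that unfolding l_def infnorm_segment_diff by (intro mult_right_mono) (auto simp: infnorm_pos_le)
    with short show ?thesis by (simp add: sball_def infnorm_sub)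
  qed
  have h_in_V: "(l \<tau>, h (l \<tau>)) \<in> V" if "\<tau> \<in> {s..t}" for \<tau>
    using chart l_near[OF that] unfolding graph_chart_def l_def by blast
  have "(l s, \<gamma> s) \<in> V \<inter> (sball (l s) e \<times> sball (\<gamma> s) e)"
    using lift \<open>0 \<le> s\<close> sball_center[OF \<open>e > 0\<close>, of "l s"] sball_center[OF \<open>e > 0\<close>, of "\<gamma> s"]
    unfolding ray_lift_def l_def by auto
  then have "snd (l s, \<gamma> s) = h (fst (l s, \<gamma> s))"
    using chart unfolding graph_chart_def l_def by blast
  then have "\<gamma> s = h (l s)" by simp
  moreover have "sup_lipschitz_path_on (lip * infnorm (u - c)) {s..t} (\<lambda>\<tau>. h (l \<tau>))"
    unfolding sup_lipschitz_path_on_def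
  proof (intro ballI)
    fix \<tau>1 \<tau>2 assume "\<tau>1 \<in> {s..t}" "\<tau>2 \<in> {s..t}"
    then have "infnorm (h (l \<tau>1) - h (l \<tau>2)) \<le> lip * infnorm (l \<tau>1 - l \<tau>2)"
      using chart l_near unfolding graph_chart_def sup_lipschitz_on_def l_def by blast
    then show "infnorm (h (l \<tau>1) - h (l \<tau>2)) \<le> lip * infnorm (u - c) * \<bar>\<tau>1 - \<tau>2\<bar>"
      unfolding l_def infnorm_segment_diff by (simp add: algebra_simps)
  qed
  ultimately have "sup_lipschitz_path_on (lip * infnorm (u - c)) {0..t}
      (\<lambda>\<tau>. if \<tau> \<le> s then \<gamma> \<tau> else h (l \<tau>))"
    using lift unfolding ray_lift_def by (intro sup_lipschitz_path_on_glue) auto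
  moreover have "(l \<tau>, if \<tau> \<le> s then \<gamma> \<tau> else h (l \<tau>)) \<in> V" if "\<tau> \<in> {0..t}" for \<tau>
    using lift h_in_V that unfolding ray_lift_def l_def by auto
  ultimately show ?thesis
    using lift \<open>0 \<le> s\<close> unfolding ray_lift_def l_def by auto
qed

lemma ray_lift_exists:
  assumes "infnorm (u - c) < \<epsilon>"
  obtains \<gamma> where "ray_lift 1 u \<gamma>"
proof -
  define r where "r = infnorm (u - c)"
  have "r \<ge> 0" unfolding r_def by (rule infnorm_pos_le)
  obtain e where "e > 0"
    and charts: "\<And>y. y \<in> V_cbox r \<Longrightarrow> \<exists>h. graph_chart lip V (sball (fst y) e) (sball (snd y) e) h"
    using uniform_graph_charts assms unfolding r_def by metis
  have "\<exists>\<gamma>. ray_lift 1 u \<gamma>"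
  proof (rule unit_interval_step_induct[where P = "\<lambda>t. \<exists>\<gamma>. ray_lift t u \<gamma>" and \<tau> = "e / (r + 1)"])
    show "e / (r + 1) > 0" using \<open>e > 0\<close> \<open>r \<ge> 0\<close> by simp
    show "\<exists>\<gamma>. ray_lift 0 u \<gamma>"
      using center_in_V lip_pos
      by (intro exI[of _ "\<lambda>_. d"]) (simp add: ray_lift_def sup_lipschitz_path_on_def infnorm_0)
  next
    fix s t assume st: "0 \<le> s" "s < t" "t \<le> 1" "t - s \<le> e / (r + 1)"
    assume "\<exists>\<gamma>. ray_lift s u \<gamma>"
    then obtain \<gamma> where lift: "ray_lift s u \<gamma>" ..
    then have "(c + s *\<^sub>R (u - c), \<gamma> s) \<in> V_cbox r"
      by (rule ray_lift_in_V_cbox) (use st in \<open>auto simp: r_def\<close>)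
    then obtain h where chart: "graph_chart lip V (sball (c + s *\<^sub>R (u - c)) e) (sball (\<gamma> s) e) h"
      using charts by fastforce
    have "(t - s) * r < e"
    proof -
      have "(t - s) * r \<le> e / (r + 1) * r" using st \<open>r \<ge> 0\<close> by (intro mult_right_mono) auto
      also have "\<dots> < e" using \<open>e > 0\<close> \<open>r \<ge> 0\<close> by (simp add: field_simps)
      finally show ?thesis .
    qed
    then have "ray_lift t u (\<lambda>\<tau>. if \<tau> \<le> s then \<gamma> \<tau> else h (c + \<tau> *\<^sub>R (u - c)))"
      using st unfolding r_def by (intro ray_lift_extend[OF lift \<open>0 \<le> s\<close> _ \<open>e > 0\<close> chart]) auto
    then show "\<exists>\<gamma>. ray_lift t u \<gamma>" by blast
  qed simp_all
  with that show ?thesis by blast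
qed

lemma ray_lifts_near:
  assumes lift: "ray_lift 1 u \<gamma>" and lift': "ray_lift 1 u' \<gamma>'"
    and u: "infnorm (u - c) \<le> r" and u': "infnorm (u' - c) \<le> r"
    and st: "0 \<le> s" "s \<le> t" "t \<le> 1"
    and at_s: "infnorm (\<gamma>' s - \<gamma> s) \<le> lip * infnorm (u - u')"
    and small: "(1 + lip) * (r * (t - s) + infnorm (u - u')) < e"
  shows "(c + t *\<^sub>R (u - c), \<gamma> t) \<in> sball (c + s *\<^sub>R (u - c)) e \<times> sball (\<gamma> s) e"
    and "(c + t *\<^sub>R (u' - c), \<gamma>' t) \<in> sball (c + s *\<^sub>R (u - c)) e \<times> sball (\<gamma> s) e"
proof -
  define l where "l v \<tau> = c + \<tau> *\<^sub>R (v - c)" for v \<tau>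
  define \<delta> where "\<delta> = r * (t - s)"
  define \<rho> where "\<rho> = infnorm (u - u')"
  have "0 \<le> \<delta>" "0 \<le> \<rho>" "0 \<le> lip * \<delta>" "0 \<le> lip * \<rho>"
    using u st lip_pos infnorm_pos_le[of "u - c"] infnorm_pos_le[of "u - u'"]
    unfolding \<delta>_def \<rho>_def by auto
  have l_step: "infnorm (l v t - l v s) \<le> \<delta>" if "infnorm (v - c) \<le> r" for v
    using that st unfolding l_def \<delta>_def infnorm_segment_diff
    by (simp add: mult.commute[of _ "t - s"] mult_left_mono)
  have lift_step: "infnorm (\<gamma> t - \<gamma> s) \<le> lip * \<delta>" "infnorm (\<gamma>' t - \<gamma>' s) \<le> lip * \<delta>"
  proof -
    have "lip * infnorm (v - c) * \<bar>t - s\<bar> \<le> lip * \<delta>" if "infnorm (v - c) \<le> r" for v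
      using that st lip_pos unfolding \<delta>_def
      by (simp add: mult.assoc mult_left_mono mult_right_mono)
    then show "infnorm (\<gamma> t - \<gamma> s) \<le> lip * \<delta>" "infnorm (\<gamma>' t - \<gamma>' s) \<le> lip * \<delta>"
      using ray_lift_lipschitz[OF lift, of s t] ray_lift_lipschitz[OF lift', of s t] u u' st
      by (meson atLeastAtMost_iff order_trans)+
  qed
  have "infnorm (l u' t - l u t) = t * \<rho>"
  proof -
    have "l u' t - l u t = t *\<^sub>R (u' - u)" by (simp add: l_def algebra_simps)
    then show ?thesis using st by (simp add: \<rho>_def infnorm_mul infnorm_sub)
  qed
  also have "\<dots> \<le> \<rho>" using st \<open>0 \<le> \<rho>\<close> by (simp add: mult_left_le_one_le)
  finally have "infnorm (l u' t - l u t) \<le> \<rho>" .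
  have "infnorm (l u' t - l u s) \<le> infnorm (l u' t - l u t) + infnorm (l u t - l u s)"
    using infnorm_triangle[of "l u' t - l u t" "l u t - l u s"] by simp
  moreover have "infnorm (\<gamma>' t - \<gamma> s) \<le> infnorm (\<gamma>' t - \<gamma>' s) + infnorm (\<gamma>' s - \<gamma> s)"
    using infnorm_triangle[of "\<gamma>' t - \<gamma>' s" "\<gamma>' s - \<gamma> s"] by simp
  moreover have "(1 + lip) * (\<delta> + \<rho>) = \<delta> + \<rho> + lip * \<delta> + lip * \<rho>"
    by (simp add: algebra_simps)
  ultimately have "infnorm (l u t - l u s) < e" "infnorm (\<gamma> t - \<gamma> s) < e"
    "infnorm (l u' t - l u s) < e" "infnorm (\<gamma>' t - \<gamma> s) < e"
    using l_step[OF u] lift_step \<open>infnorm (l u' t - l u t) \<le> \<rho>\<close> at_s small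
      \<open>0 \<le> \<delta>\<close> \<open>0 \<le> \<rho>\<close> \<open>0 \<le> lip * \<delta>\<close> \<open>0 \<le> lip * \<rho>\<close>
    unfolding \<delta>_def \<rho>_def by linarith+
  then show "(c + t *\<^sub>R (u - c), \<gamma> t) \<in> sball (c + s *\<^sub>R (u - c)) e \<times> sball (\<gamma> s) e"
    and "(c + t *\<^sub>R (u' - c), \<gamma>' t) \<in> sball (c + s *\<^sub>R (u - c)) e \<times> sball (\<gamma> s) e"
    by (auto simp: sball_def l_def infnorm_sub)
qed

lemma ray_lifts_close:
  assumes "e > 0"
    and charts: "\<And>y. y \<in> V_cbox r \<Longrightarrow> \<exists>h. graph_chart lip V (sball (fst y) e) (sball (snd y) e) h"
    and u: "infnorm (u - c) \<le> r" and u': "infnorm (u' - c) \<le> r"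
    and lift: "ray_lift 1 u \<gamma>" and lift': "ray_lift 1 u' \<gamma>'"
    and close: "(1 + lip) * infnorm (u - u') < e / 2"
  shows "infnorm (\<gamma> 1 - \<gamma>' 1) \<le> lip * infnorm (u - u')"
proof -
  define \<rho> where "\<rho> = infnorm (u - u')"
  have "r \<ge> 0" using u infnorm_pos_le order_trans by blast
  define K where "K = (1 + lip) * (r + 1)"
  have "K > 0" using lip_pos \<open>r \<ge> 0\<close> by (simp add: K_def)
  define \<tau> where "\<tau> = e / (2 * K)"
  have "\<tau> > 0" using \<open>e > 0\<close> \<open>K > 0\<close> by (simp add: \<tau>_def)
  have "(1 + lip) * (r * \<tau>) < K * \<tau>"
    using \<open>\<tau> > 0\<close> lip_pos by (simp add: K_def algebra_simps add_pos_pos)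
  also have "\<dots> = e / 2" using \<open>K > 0\<close> by (simp add: \<tau>_def)
  finally have "(1 + lip) * (r * \<tau>) < e / 2" .
  have "infnorm (\<gamma> t - \<gamma>' t) \<le> lip * t * \<rho>" if "0 \<le> t" "t \<le> 1" for t
  proof (rule unit_interval_step_induct[where P = "\<lambda>t. infnorm (\<gamma> t - \<gamma>' t) \<le> lip * t * \<rho>",
        OF \<open>\<tau> > 0\<close> _ _ that])
    show "infnorm (\<gamma> 0 - \<gamma>' 0) \<le> lip * 0 * \<rho>"
      using lift lift' by (simp add: ray_lift_def infnorm_0)
  next
    fix s t assume st: "0 \<le> s" "s < t" "t \<le> 1" "t - s \<le> \<tau>"
      and IH: "infnorm (\<gamma> s - \<gamma>' s) \<le> lip * s * \<rho>"
    have "(c + s *\<^sub>R (u - c), \<gamma> s) \<in> V_cbox r"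
      by (rule ray_lift_in_V_cbox[OF lift u]) (use st in auto)
    then obtain h where chart: "graph_chart lip V (sball (c + s *\<^sub>R (u - c)) e) (sball (\<gamma> s) e) h"
      using charts by fastforce
    have "lip * s * \<rho> \<le> lip * \<rho>"
      using st lip_pos infnorm_pos_le[of "u - u'"] by (simp add: \<rho>_def mult_left_le_one_le mult.commute)
    with IH have at_s: "infnorm (\<gamma>' s - \<gamma> s) \<le> lip * infnorm (u - u')"
      by (simp add: \<rho>_def infnorm_sub)
    have "(1 + lip) * (r * (t - s)) \<le> (1 + lip) * (r * \<tau>)"
      using st lip_pos \<open>r \<ge> 0\<close> by (intro mult_left_mono) auto
    with \<open>(1 + lip) * (r * \<tau>) < e / 2\<close> close
    have "(1 + lip) * (r * (t - s) + infnorm (u - u')) < e" by (simp add: distrib_left)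
    from ray_lifts_near[OF lift lift' u u' _ _ _ at_s this] st lift lift'
    have "(c + t *\<^sub>R (u - c), \<gamma> t) \<in> V \<inter> (sball (c + s *\<^sub>R (u - c)) e \<times> sball (\<gamma> s) e)"
      "(c + t *\<^sub>R (u' - c), \<gamma>' t) \<in> V \<inter> (sball (c + s *\<^sub>R (u - c)) e \<times> sball (\<gamma> s) e)"
      unfolding ray_lift_def by auto
    from graph_chart_lipschitz[OF chart this]
    have "infnorm (\<gamma> t - \<gamma>' t) \<le> lip * infnorm ((c + t *\<^sub>R (u - c)) - (c + t *\<^sub>R (u' - c)))"
      by simp
    also have "(c + t *\<^sub>R (u - c)) - (c + t *\<^sub>R (u' - c)) = t *\<^sub>R (u - u')"
      by (simp add: algebra_simps)
    finally show "infnorm (\<gamma> t - \<gamma>' t) \<le> lip * t * \<rho>"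
      using st by (simp add: \<rho>_def infnorm_mul mult.assoc)
  qed
  from this[of 1] show ?thesis by (simp add: \<rho>_def)
qed

definition graph_fun :: "real ^ 'p \<Rightarrow> real ^ 'q" where
  "graph_fun u = (SOME \<gamma>. ray_lift 1 u \<gamma>) 1"

lemma ray_lift_graph_fun:
  assumes "u \<in> sball c \<epsilon>"
  shows "ray_lift 1 u (SOME \<gamma>. ray_lift 1 u \<gamma>)"
  using assms ray_lift_exists[of u] someI[of "ray_lift 1 u"] by (auto simp: sball_def)

lemma graph_fun_in_V:
  assumes "u \<in> sball c \<epsilon>"
  shows "(u, graph_fun u) \<in> V"
proof -
  have "\<forall>t\<in>{0..1}. (c + t *\<^sub>R (u - c), (SOME \<gamma>. ray_lift 1 u \<gamma>) t) \<in> V"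
    using ray_lift_graph_fun[OF assms] unfolding ray_lift_def by blast
  then have "(c + 1 *\<^sub>R (u - c), (SOME \<gamma>. ray_lift 1 u \<gamma>) 1) \<in> V"
    by (rule bspec) simp
  then show ?thesis by (simp add: graph_fun_def)
qed

lemma graph_fun_dist:
  assumes "u \<in> sball c \<epsilon>"
  shows "infnorm (graph_fun u - d) \<le> lip * infnorm (u - c)"
  using ray_lift_lipschitz[OF ray_lift_graph_fun[OF assms], of 0 1] ray_lift_graph_fun[OF assms]
  unfolding graph_fun_def ray_lift_def by simp

lemma graph_fun_in_sball: "u \<in> sball c \<epsilon> \<Longrightarrow> graph_fun u \<in> sball d (lip * \<epsilon>)"
  using graph_fun_dist[of u] lip_pos by (auto simp: sball_def intro: order.strict_trans1)

lemma graph_fun_center: "graph_fun c = d"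
proof -
  have "infnorm (graph_fun c - d) \<le> 0"
    using graph_fun_dist[OF sball_center[OF eps_pos]] by (simp add: infnorm_0)
  then have "infnorm (graph_fun c - d) = 0" using infnorm_pos_le antisym by blast
  then show ?thesis by (simp add: infnorm_eq_0)
qed

lemma graph_fun_lipschitz_cbox:
  assumes "r < \<epsilon>"
  shows "sup_lipschitz_on lip {u. infnorm (u - c) \<le> r} graph_fun"
proof -
  obtain e where "e > 0"
    and charts: "\<And>y. y \<in> V_cbox r \<Longrightarrow> \<exists>h. graph_chart lip V (sball (fst y) e) (sball (snd y) e) h"
    using uniform_graph_charts[OF assms] by metis
  show ?thesis
  proof (rule sup_lipschitz_on_convex_if_local)
    show "convex {u. infnorm (u - c) \<le> r}"
      unfolding infnorm_cball_eq_cbox by (rule convex_box)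
    show "e / 2 / (1 + lip) > 0" using \<open>e > 0\<close> lip_pos by simp
    fix a b assume a: "a \<in> {u. infnorm (u - c) \<le> r}" and b: "b \<in> {u. infnorm (u - c) \<le> r}"
      and "infnorm (a - b) < e / 2 / (1 + lip)"
    then have close: "(1 + lip) * infnorm (a - b) < e / 2"
      using lip_pos by (simp add: field_simps)
    have "a \<in> sball c \<epsilon>" "b \<in> sball c \<epsilon>" using a b assms by (auto simp: sball_def)
    then show "infnorm (graph_fun a - graph_fun b) \<le> lip * infnorm (a - b)"
      unfolding graph_fun_def using a b close
      by (intro ray_lifts_close[OF \<open>e > 0\<close> charts _ _ ray_lift_graph_fun ray_lift_graph_fun]) auto
  qed
qed

lemma graph_fun_lipschitz: "sup_lipschitz_on lip (sball c \<epsilon>) graph_fun"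
  unfolding sup_lipschitz_on_def
proof (intro ballI)
  fix a b assume "a \<in> sball c \<epsilon>" "b \<in> sball c \<epsilon>"
  then have "max (infnorm (a - c)) (infnorm (b - c)) < \<epsilon>" by (simp add: sball_def)
  from graph_fun_lipschitz_cbox[OF this]
  show "infnorm (graph_fun a - graph_fun b) \<le> lip * infnorm (a - b)"
    unfolding sup_lipschitz_on_def by simp
qed

lemma openin_graph_fun:
  "openin (top_of_set (V \<inter> (sball c \<epsilon> \<times> sball d (lip * \<epsilon>)))) {(u, graph_fun u) |u. u \<in> sball c \<epsilon>}"
  (is "openin (top_of_set ?P) ?\<Gamma>")
proof (subst openin_subopen, intro ballI)
  fix z assume "z \<in> ?\<Gamma>"
  then obtain u where "u \<in> sball c \<epsilon>" and z: "z = (u, graph_fun u)" by blast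
  obtain \<rho> h where "\<rho> > 0"
    and chart: "graph_chart lip V (sball u \<rho>) (sball (graph_fun u) \<rho>) h"
    using c1_submanifold_graph_chart[OF c1 bounded graph_fun_in_V[OF \<open>u \<in> sball c \<epsilon>\<close>]]
    unfolding lip_def by auto
  define T where "T = sball c \<epsilon> \<inter> sball u \<rho> \<inter> graph_fun -` sball (graph_fun u) \<rho>"
  have "open T"
    unfolding T_def using sup_lipschitz_on_imp_continuous_on[OF graph_fun_lipschitz]
    by (intro continuous_open_preimage open_Int open_sball) (auto elim: continuous_on_subset)
  then have "openin (top_of_set ?P) (?P \<inter> (T \<times> sball (graph_fun u) \<rho>))"
    by (intro openin_open_Int open_Times open_sball)
  moreover have "z \<in> ?P \<inter> (T \<times> sball (graph_fun u) \<rho>)"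
    using \<open>u \<in> sball c \<epsilon>\<close> graph_fun_in_V graph_fun_in_sball
      sball_center[OF \<open>\<rho> > 0\<close>, of u] sball_center[OF \<open>\<rho> > 0\<close>, of "graph_fun u"]
    by (auto simp: z T_def)
  moreover have "?P \<inter> (T \<times> sball (graph_fun u) \<rho>) \<subseteq> ?\<Gamma>"
  proof clarify
    fix a b assume "(a, b) \<in> V" "a \<in> T" "b \<in> sball (graph_fun u) \<rho>"
    then have "(a, b) \<in> V \<inter> (sball u \<rho> \<times> sball (graph_fun u) \<rho>)"
      "(a, graph_fun a) \<in> V \<inter> (sball u \<rho> \<times> sball (graph_fun u) \<rho>)"
      using graph_fun_in_V[of a] unfolding T_def by auto
    then have "snd (a, b) = h (fst (a, b))" "snd (a, graph_fun a) = h (fst (a, graph_fun a))"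
      using chart unfolding graph_chart_def by blast+
    then have "b = h a" and "graph_fun a = h a" by simp_all
    then show "\<exists>a'. (a, b) = (a', graph_fun a') \<and> a' \<in> sball c \<epsilon>"
      using \<open>a \<in> T\<close> unfolding T_def by auto
  qed
  ultimately show "\<exists>T. openin (top_of_set ?P) T \<and> z \<in> T \<and> T \<subseteq> ?\<Gamma>" by blast
qed

lemma connected_component_eq_graph_fun:
  "connected_component_set (V \<inter> (sball c \<epsilon> \<times> sball d (lip * \<epsilon>))) (c, d)
     = {(u, graph_fun u) |u. u \<in> sball c \<epsilon>}"
proof (rule connected_component_eq_clopen)
  have cont: "continuous_on (sball c \<epsilon>) graph_fun"
    by (rule sup_lipschitz_on_imp_continuous_on[OF graph_fun_lipschitz])
  show "(c, d) \<in> {(u, graph_fun u) |u. u \<in> sball c \<epsilon>}"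
    using sball_center[OF eps_pos] graph_fun_center by force
  have "{(u, graph_fun u) |u. u \<in> sball c \<epsilon>} = (\<lambda>u. (u, graph_fun u)) ` sball c \<epsilon>" by auto
  then show "connected {(u, graph_fun u) |u. u \<in> sball c \<epsilon>}"
    by (simp only:) (intro connected_continuous_image continuous_on_Pair continuous_on_id cont
        convex_connected convex_sball)
  show "closedin (top_of_set (V \<inter> (sball c \<epsilon> \<times> sball d (lip * \<epsilon>)))) {(u, graph_fun u) |u. u \<in> sball c \<epsilon>}"
    by (rule closedin_subset_trans[OF closedin_graph[OF cont]])
      (use graph_fun_in_V graph_fun_in_sball in auto)
qed (rule openin_graph_fun)

end

theorem lemma1p5:
  fixes V :: "((real ^ 'p) \<times> (real ^ 'q)) set"
    and x :: "(real ^ 'p) \<times> (real ^ 'q)"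
    and \<eta> \<epsilon> :: real
  assumes "\<eta> > 0"
    and "c1_submanifold V"
    and "eta_bounded \<eta> V"
    and "x \<in> V"
    and "\<epsilon> > 0"
    and "(sball (fst x) \<epsilon> \<times> sball (snd x) (real CARD('p) * \<eta> * \<epsilon>)) \<inter> frontier_set V = {}"
  shows "\<exists>g. g ` sball (fst x) \<epsilon> \<subseteq> sball (snd x) (real CARD('p) * \<eta> * \<epsilon>) \<and>
             sup_lipschitz_on (real CARD('p) * \<eta>) (sball (fst x) \<epsilon>) g \<and>
             connected_component_set (V \<inter> (sball (fst x) \<epsilon> \<times> sball (snd x) (real CARD('p) * \<eta> * \<epsilon>))) x
               = {(u, g u) | u. u \<in> sball (fst x) \<epsilon>}"
proof -
  interpret eta_bounded_box V "fst x" "snd x" \<eta> \<epsilon> "real CARD('p) * \<eta>"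
    by unfold_locales (use assms in simp_all)
  show ?thesis
    using graph_fun_in_sball graph_fun_lipschitz connected_component_eq_graph_fun
    by (intro exI[of _ graph_fun]) auto
qed

end
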